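(* Let $\Omega\subset\mathbb{R}^{n+1}$ be a compact convex body with $C^1$ boundary containing $0$ in its interior. Let $\Theta\in[0,1)$, let $r_\Theta>0$ satisfy $\omega_\Omega(r_\Theta)<\sqrt{2-2\Theta}$, and let $\delta>0$. Assume $u$ is a $c$-convex function whose Lipschitz constant $L_u>0$ with respect to $d_{\partial\Omega}$ satisfies $$L_u<\frac{\delta\,r_\Theta}{2C_{\partial\Omega}}.$$ Then for every $X\in\partial\Omega$, $\partial_c^\Omega u(X)\subset B^{n+1}_{\delta r_\Theta}(X)$.
   Context: $c(X,Y)=\frac{|X-Y|^2}{2}$; $R_\Omega>0$ with $\Omega\Subset B^{n+1}_{R_\Omega}(0)$; $u$ is $c$-convex if $u=v^c\not\equiv\infty$ where $v^c(\bar X):=\sup_{X\in B^{n+1}_{R_\Omega}(0)}(-c(X,\bar X)-v(X))$. $\partial_c^\Omega u(X):=\{\bar X\in\partial\Omega\mid u(Y)\ge-c(Y,\bar X)+c(X,\bar X)+u(X)\ \forall Y\in\partial\Omega\}$. $\omega_\Omega(r):=\sup\{|\mathcal{N}_\Omega(X_1)-\mathcal{N}_\Omega(X_2)|:X_i\in\partial\Omega,|X_1-X_2|<r\}$ with $\mathcal{N}_\Omega$ the outward unit normal. $d_{\partial\Omega}(X_1,X_2):=\inf\int_0^1|\dot\sigma(t)|dt$ over $C^1$ curves $\sigma$ in $\partial\Omega$ from $X_1$ to $X_2$, and $C_{\partial\Omega}\ge1$ is a constant with $|X_1-X_2|\le d_{\partial\Omega}(X_1,X_2)\le C_{\partial\Omega}|X_1-X_2|$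 for all $X_1,X_2\in\partial\Omega$. *)

theory Defs
  imports "HOL-Analysis.Analysis" "HOL-Library.Extended_Real"
begin

definition cost :: "'a::euclidean_space \<Rightarrow> 'a \<Rightarrow> real" where
  "cost X Y = (norm (X - Y))^2 / 2"

definition c_transform :: "real \<Rightarrow> ('a::euclidean_space \<Rightarrow> ereal) \<Rightarrow> 'a \<Rightarrow> ereal" where
  "c_transform R v Xb = (SUP X\<in>ball 0 R. ereal (- cost X Xb) - v X)"

definition c_convex :: "real \<Rightarrow> ('a::euclidean_space \<Rightarrow> ereal) \<Rightarrow> bool" where
  "c_convex R u \<longleftrightarrow> (\<exists>v. u = c_transform R v) \<and> (\<exists>X. u X \<noteq> \<infinity>)"

definition c_subdiff :: "'a::euclidean_space set \<Rightarrow> ('a \<Rightarrow> ereal) \<Rightarrow> 'a \<Rightarrow> 'a set" where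
  "c_subdiff \<Omega> u X = {Xb \<in> frontier \<Omega>. \<forall>Y\<in>frontier \<Omega>.
      u Y \<ge> ereal (- cost Y Xb + cost X Xb) + u X}"

definition convex_body :: "'a::euclidean_space set \<Rightarrow> bool" where
  "convex_body \<Omega> \<longleftrightarrow> compact \<Omega> \<and> convex \<Omega> \<and> interior \<Omega> \<noteq> {}"

definition C1_boundary :: "'a::euclidean_space set \<Rightarrow> bool" where
  "C1_boundary \<Omega> \<longleftrightarrow> (\<forall>X\<in>frontier \<Omega>. \<exists>r>0. \<exists>\<rho> g.
      (\<forall>Y\<in>ball X r. (\<rho> has_derivative (\<lambda>h. g Y \<bullet> h)) (at Y)) \<and>
      continuous_on (ball X r) g \<and> (\<forall>Y\<in>ball X r. g Y \<noteq> 0) \<and>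
      (\<forall>Y\<in>ball X r. Y \<in> \<Omega> \<longleftrightarrow> \<rho> Y \<le> 0))"

text \<open>Outward unit normal at a boundary point of a convex body with C^1 boundary:
  the unique unit outer normal of the (unique) supporting hyperplane.\<close>
definition outer_normal :: "'a::euclidean_space set \<Rightarrow> 'a \<Rightarrow> 'a" where
  "outer_normal \<Omega> X = (THE \<nu>. norm \<nu> = 1 \<and> (\<forall>Y\<in>\<Omega>. (Y - X) \<bullet> \<nu> \<le> 0))"

definition omega_mod :: "'a::euclidean_space set \<Rightarrow> real \<Rightarrow> real" where
  "omega_mod \<Omega> r = Sup {norm (outer_normal \<Omega> X1 - outer_normal \<Omega> X2) | X1 X2.
      X1 \<in> frontier \<Omega> \<and> X2 \<in> frontier \<Omega> \<and> norm (X1 - X2) < r}"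

definition bdry_dist :: "'a::euclidean_space set \<Rightarrow> 'a \<Rightarrow> 'a \<Rightarrow> real" where
  "bdry_dist \<Omega> X1 X2 = Inf {integral {0..1} (\<lambda>t. norm (\<sigma>' t)) | \<sigma> \<sigma>'.
      (\<forall>t\<in>{0..1::real}. (\<sigma> has_vector_derivative \<sigma>' t) (at t within {0..1})) \<and>
      continuous_on {0..1} \<sigma>' \<and> \<sigma> ` {0..1} \<subseteq> frontier \<Omega> \<and> \<sigma> 0 = X1 \<and> \<sigma> 1 = X2}"

end

theory Submission
  imports Defs
begin

text \<open>Testing the c-subdifferential inequality at \<open>Y = Xb\<close> gives
  \<open>|X - Xb|\<^sup>2 / 2 \<le> u Xb - u X\<close>, while the Lipschitz bound and the comparability of
  \<open>d\<^sub>\<partial>\<^sub>\<Omega>\<close> with the Euclidean distance give \<open>u Xb - u X \<le> L C |X - Xb|\<close>.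
  Hence \<open>|X - Xb| \<le> 2 L C < \<delta> r\<^sub>\<Theta>\<close>.\<close>

lemma cost_self [simp]: "cost X X = 0"
  by (simp add: cost_def)

lemma c_subdiff_cost_le:
  assumes "Xb \<in> c_subdiff \<Omega> u X" and "\<bar>u X\<bar> \<noteq> \<infinity>" and "\<bar>u Xb\<bar> \<noteq> \<infinity>"
  shows "cost X Xb \<le> real_of_ereal (u Xb) - real_of_ereal (u X)"
proof -
  obtain a b where a: "u X = ereal a" and b: "u Xb = ereal b"
    using assms(2,3) by (cases "u X"; cases "u Xb") auto
  have "ereal (cost X Xb) + u X \<le> u Xb"
    using assms(1) unfolding c_subdiff_def by auto
  then show ?thesis
    using a b by simp
qed

lemma half_square_le_linear_imp_le:
  fixes n K :: real
  assumes "0 \<le> n" and "0 \<le> K" and "n\<^sup>2 / 2 \<le> K * n"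
  shows "n \<le> 2 * K"
proof (cases "n = 0")
  case False
  with assms have "n * n \<le> (2 * K) * n"
    by (simp add: power2_eq_square)
  with False assms(1) show ?thesis
    by (simp add: mult_le_cancel_right)
qed (use assms in simp)

lemma c_subdiff_dist_le:
  assumes "Xb \<in> c_subdiff \<Omega> u X" and "\<bar>u X\<bar> \<noteq> \<infinity>" and "\<bar>u Xb\<bar> \<noteq> \<infinity>"
    and "0 \<le> K" and "real_of_ereal (u Xb) - real_of_ereal (u X) \<le> K * dist X Xb"
  shows "dist X Xb \<le> 2 * K"
proof (rule half_square_le_linear_imp_le)
  show "(dist X Xb)\<^sup>2 / 2 \<le> K * dist X Xb"
    using c_subdiff_cost_le[OF assms(1-3)] assms(5) by (simp add: cost_def dist_norm)
qed (simp_all add: assms(4))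

theorem proposition5p2:
  fixes \<Omega> :: "'a::euclidean_space set" and u :: "'a \<Rightarrow> ereal"
    and R \<Theta> r\<^sub>\<Theta> \<delta> C L :: real
  assumes body: "convex_body \<Omega>" and C1: "C1_boundary \<Omega>" and zero_int: "0 \<in> interior \<Omega>"
    and R: "R > 0" "\<Omega> \<subseteq> ball 0 R"
    and C: "C \<ge> 1"
      "\<forall>X1\<in>frontier \<Omega>. \<forall>X2\<in>frontier \<Omega>. norm (X1 - X2) \<le> bdry_dist \<Omega> X1 X2 \<and>
          bdry_dist \<Omega> X1 X2 \<le> C * norm (X1 - X2)"
    and Theta: "0 \<le> \<Theta>" "\<Theta> < 1"
    and rT: "r\<^sub>\<Theta> > 0" "omega_mod \<Omega> r\<^sub>\<Theta> < sqrt (2 - 2 * \<Theta>)"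
    and delta: "\<delta> > 0"
    and cconv: "c_convex R u"
    and finite_bd: "\<forall>X\<in>frontier \<Omega>. \<bar>u X\<bar> \<noteq> \<infinity>"
    and Lip: "\<forall>X\<in>frontier \<Omega>. \<forall>Y\<in>frontier \<Omega>.
       \<bar>real_of_ereal (u X) - real_of_ereal (u Y)\<bar> \<le> L * bdry_dist \<Omega> X Y"
    and L: "L > 0" "L < \<delta> * r\<^sub>\<Theta> / (2 * C)"
  shows "\<forall>X\<in>frontier \<Omega>. c_subdiff \<Omega> u X \<subseteq> ball X (\<delta> * r\<^sub>\<Theta>)"
proof (intro ballI subsetI)
  fix X Xb
  assume X: "X \<in> frontier \<Omega>" and Xb: "Xb \<in> c_subdiff \<Omega> u X"
  then have Xb_frontier: "Xb \<in> frontier \<Omega>"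
    by (simp add: c_subdiff_def)
  have "real_of_ereal (u Xb) - real_of_ereal (u X) \<le> L * bdry_dist \<Omega> Xb X"
    using Lip X Xb_frontier by force
  also have "\<dots> \<le> (L * C) * dist X Xb"
    using C(2) X Xb_frontier L(1)
    by (auto simp: dist_norm norm_minus_commute mult.assoc intro: mult_left_mono)
  finally have gain: "real_of_ereal (u Xb) - real_of_ereal (u X) \<le> (L * C) * dist X Xb" .
  have "dist X Xb \<le> 2 * (L * C)"
    using c_subdiff_dist_le[OF Xb _ _ _ gain] X Xb_frontier finite_bd L(1) C(1) by simp
  also have "\<dots> < \<delta> * r\<^sub>\<Theta>"
    using L C(1) by (simp add: field_simps)
  finally show "Xb \<in> ball X (\<delta> * r\<^sub>\<Theta>)"
    by simp
qed

end
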